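(* Let $\widehat{\mathbf M}\otimes\mathcal A_\psi$ be the product of a gMDP $\widehat{\mathbf M}$ (state space $\hat{\mathbb X}$, input space $\hat{\mathbb U}$) with the DFA $\mathcal A_\psi=(Q,q_0,\Sigma,F,\tau)$, let $\delta\ge 0$, let $\mu$ be a stationary Markov policy, and let $I$ be an absorbing set for $\mu$. Then every function $V:\hat{\mathbb X}\times Q\to[0,1]$ satisfies, for all integers $l\ge1$, $$0\le(\mathbf T^\mu_\delta)^l(V)(\hat x,q)\le\mathbf L(\|V\|_\infty-l\delta)\qquad\forall(\hat x,q)\in I.$$ In particular, if $\delta>0$ then $(\mathbf T^\mu_\delta)^l(V)(\hat x,q)=0$ for all $(\hat x,q)\in I$ and all $l\ge1/\delta$.
   Context: A gMDP $\widehat{\mathbf M}=(\hat{\mathbb X},\hat{\mathbb U},\mathbb Y,\hat x_0,\hat{\mathbf t},\hat h)$: Polish state/input spaces, metric output space $\mathbb Y$, kernel $\hat{\mathbf t}(\cdot\mid\hat x,\hat u)$, measurable output map $\hat h$. $\Sigma=2^{\mathsf{AP}}$, $\mathsf L:\mathbb Y\to\Sigma$ measurable labelling; $\mathcal A_\psi$ a DFA (accepting set $F$, transition $\tau$) for an scLTL formula $\psi$. Product $\widehat{\mathbf M}\otimes\mathcal A_\psi$: states $\hat{\mathbb X}\times Q$, inputs $\hat{\mathbb U}$, kernel $\bar{\mathbf t}(d\hat x'\times\{q'\}\mid\hat x,q,u)=\mathbf 1_{\{q'\}}(\tau(q,\mathsf L(\hat h(\hat x'))))\hat{\mathbf t}(d\hat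 x'\mid\hat x,u)$. Stationary Markov policy: universally measurable $\mu:\hat{\mathbb X}\times Q\to\mathcal P(\hat{\mathbb U})$ used at every step. $\mathbf T^\mu(V)(\hat x,q)=\int\max\{\mathbf 1_F(q'),V(\hat x',q')\}\bar{\mathbf t}(d\hat x'\times\{q'\}\mid\hat x,q,\mu(\hat x,q))$, $\mathbf T^\mu_\delta(V)=\mathbf L(\mathbf T^\mu(V)-\delta)$ with $\mathbf L(r)=\min(1,\max(0,r))$; $\|V\|_\infty=\sup|V|$. An absorbing set for $\mu$ is $I\subseteq\hat{\mathbb X}\times(Q\setminus F)$ such that, under $\mu$, $\mathbb P[(\hat x_{t+1},q_{t+1})\in I\mid(\hat x_t,q_t)]=1$ for all $(\hat x_t,q_t)\in I$. *)

theory Defs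
  imports "HOL-Probability.Probability"
begin

definition prod_space :: "('x::topological_space \<times> 'q) measure" where
  "prod_space = borel \<Otimes>\<^sub>M count_space UNIV"

definition universal_completion :: "'a measure \<Rightarrow> 'a measure" where
  "universal_completion M = measure_of (space M)
     (\<Inter>P\<in>{P. prob_space P \<and> sets P = sets M}. sets (completion P)) (\<lambda>_. 0)"

definition stationary_markov_policy :: "('x::topological_space \<times> 'q \<Rightarrow> 'u::topological_space measure) \<Rightarrow> bool" where
  "stationary_markov_policy \<mu> \<longleftrightarrow>
     \<mu> \<in> universal_completion prod_space \<rightarrow>\<^sub>M prob_algebra borel"

definition prod_kernel ::
  "('x::topological_space \<Rightarrow> 'u \<Rightarrow> 'x measure) \<Rightarrow> ('x \<Rightarrow> 'y) \<Rightarrow> ('y \<Rightarrow> 'ap set)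
   \<Rightarrow> ('q \<Rightarrow> 'ap set \<Rightarrow> 'q) \<Rightarrow> ('x \<times> 'q \<Rightarrow> 'u measure) \<Rightarrow> 'x \<times> 'q \<Rightarrow> ('x \<times> 'q) measure" where
  "prod_kernel t h L \<tau> \<mu> s =
     \<mu> s \<bind> (\<lambda>u. distr (t (fst s) u) prod_space (\<lambda>x'. (x', \<tau> (snd s) (L (h x')))))"

definition T_op ::
  "('x::topological_space \<Rightarrow> 'u \<Rightarrow> 'x measure) \<Rightarrow> ('x \<Rightarrow> 'y) \<Rightarrow> ('y \<Rightarrow> 'ap set)
   \<Rightarrow> ('q \<Rightarrow> 'ap set \<Rightarrow> 'q) \<Rightarrow> 'q set \<Rightarrow> ('x \<times> 'q \<Rightarrow> 'u measure)
   \<Rightarrow> ('x \<times> 'q \<Rightarrow> real) \<Rightarrow> 'x \<times> 'q \<Rightarrow> real" where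
  "T_op t h L \<tau> F \<mu> V s =
     (\<integral>y. max (indicator F (snd y)) (V y) \<partial>(prod_kernel t h L \<tau> \<mu> s))"

definition clip01 :: "real \<Rightarrow> real" where
  "clip01 r = min 1 (max 0 r)"

definition T_delta ::
  "('x::topological_space \<Rightarrow> 'u \<Rightarrow> 'x measure) \<Rightarrow> ('x \<Rightarrow> 'y) \<Rightarrow> ('y \<Rightarrow> 'ap set)
   \<Rightarrow> ('q \<Rightarrow> 'ap set \<Rightarrow> 'q) \<Rightarrow> 'q set \<Rightarrow> ('x \<times> 'q \<Rightarrow> 'u measure) \<Rightarrow> real
   \<Rightarrow> ('x \<times> 'q \<Rightarrow> real) \<Rightarrow> 'x \<times> 'q \<Rightarrow> real" where
  "T_delta t h L \<tau> F \<mu> \<delta> V = (\<lambda>s. clip01 (T_op t h L \<tau> F \<mu> V s - \<delta>))"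

definition sup_norm :: "('a \<Rightarrow> real) \<Rightarrow> real" where
  "sup_norm V = (SUP s. \<bar>V s\<bar>)"

definition absorbing ::
  "('x::topological_space \<Rightarrow> 'u \<Rightarrow> 'x measure) \<Rightarrow> ('x \<Rightarrow> 'y) \<Rightarrow> ('y \<Rightarrow> 'ap set)
   \<Rightarrow> ('q \<Rightarrow> 'ap set \<Rightarrow> 'q) \<Rightarrow> 'q set \<Rightarrow> ('x \<times> 'q \<Rightarrow> 'u measure) \<Rightarrow> ('x \<times> 'q) set \<Rightarrow> bool" where
  "absorbing t h L \<tau> F \<mu> I \<longleftrightarrow>
     I \<subseteq> UNIV \<times> (- F) \<and>
     (\<forall>s\<in>I. AE y in prod_kernel t h L \<tau> \<mu> s. y \<in> I)"

end

theory Submission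
  imports Defs
begin

text \<open>On an absorbing set the accepting indicator vanishes and the next state stays in the set
  almost surely, so \<open>T\<^sup>\<mu>\<close> cannot raise a bound on the values over the set; subtracting \<open>\<delta>\<close> and
  clipping then lowers that bound by \<open>\<delta>\<close> at every iteration, while clipping keeps all values
  nonnegative.\<close>

lemma prob_space_prod_kernel:
  fixes t :: "'x::topological_space \<Rightarrow> 'u::topological_space \<Rightarrow> 'x measure"
    and h :: "'x \<Rightarrow> 'y::topological_space"
    and \<mu> :: "'x \<times> 'q \<Rightarrow> 'u measure"
  assumes kernel: "(\<lambda>(x, u). t x u) \<in> borel \<rightarrow>\<^sub>M prob_algebra borel"
    and h_meas: "h \<in> borel_measurable borel"
    and L_meas: "L \<in> borel \<rightarrow>\<^sub>M count_space UNIV"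
    and policy: "stationary_markov_policy \<mu>"
  shows "prob_space (prod_kernel t h L \<tau> \<mu> s)"
proof -
  have "s \<in> space (universal_completion prod_space)"
    by (simp add: universal_completion_def space_measure_of_conv prod_space_def space_pair_measure)
  then have \<mu>_s: "\<mu> s \<in> space (prob_algebra borel)"
    using policy unfolding stationary_markov_policy_def by (rule measurable_space[rotated])
  have "(\<lambda>u. (fst s, u)) \<in> (borel :: 'u measure) \<rightarrow>\<^sub>M (borel :: ('x \<times> 'u) measure)"
    by (intro borel_measurable_continuous_onI continuous_intros)
  from measurable_comp[OF this kernel]
  have t_s: "t (fst s) \<in> borel \<rightarrow>\<^sub>M prob_algebra borel"
    by (simp add: o_def)
  have "(\<lambda>x'. L (h x')) \<in> borel \<rightarrow>\<^sub>M count_space UNIV"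
    using measurable_comp[OF h_meas L_meas] by (simp add: o_def)
  then have "(\<lambda>x'. \<tau> (snd s) (L (h x'))) \<in> borel \<rightarrow>\<^sub>M count_space UNIV"
    by (rule measurable_compose) simp
  then have "(\<lambda>x'. (x', \<tau> (snd s) (L (h x')))) \<in> (borel :: 'x measure) \<rightarrow>\<^sub>M prod_space"
    unfolding prod_space_def by (intro measurable_Pair) simp_all
  then have "(\<lambda>u. distr (t (fst s) u) prod_space (\<lambda>x'. (x', \<tau> (snd s) (L (h x')))))
      \<in> borel \<rightarrow>\<^sub>M prob_algebra prod_space"
    using measurable_comp[OF t_s measurable_distr_prob_space] by (simp add: o_def)
  with \<mu>_s show ?thesis
    unfolding prod_kernel_def by (rule prob_space_bind')
qed

lemma clip01_nonneg: "0 \<le> clip01 a"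
  by (simp add: clip01_def)

lemma clip01_mono: "a \<le> b \<Longrightarrow> clip01 a \<le> clip01 b"
  by (simp add: clip01_def)

lemma clip01_eq_0: "a \<le> 0 \<Longrightarrow> clip01 a = 0"
  by (simp add: clip01_def)

lemma clip01_clip01_diff_le: "0 \<le> \<delta> \<Longrightarrow> clip01 (clip01 a - \<delta>) \<le> clip01 (a - \<delta>)"
  by (auto simp: clip01_def min_def max_def)

lemma T_op_le_of_AE_absorbed:
  assumes "prob_space (prod_kernel t h L \<tau> \<mu> s)"
    and AE_I: "AE y in prod_kernel t h L \<tau> \<mu> s. y \<in> I"
    and I_F: "I \<subseteq> UNIV \<times> (- F)"
    and W_le: "\<And>y. y \<in> I \<Longrightarrow> W y \<le> c" and "0 \<le> c"
  shows "T_op t h L \<tau> F \<mu> W s \<le> c"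
proof -
  let ?K = "prod_kernel t h L \<tau> \<mu> s"
  let ?g = "\<lambda>y. max (indicator F (snd y)) (W y) :: real"
  interpret prob_space ?K by fact
  show ?thesis
  proof (cases "integrable ?K ?g")
    case True
    have "AE y in ?K. ?g y \<le> c"
      using AE_I by eventually_elim (use I_F W_le \<open>0 \<le> c\<close> in \<open>auto simp: indicator_def\<close>)
    then have "integral\<^sup>L ?K ?g \<le> integral\<^sup>L ?K (\<lambda>_. c)"
      by (intro integral_mono_AE True) auto
    then show ?thesis by (simp add: T_op_def prob_space)
  next
    case False
    then show ?thesis using \<open>0 \<le> c\<close> by (simp add: T_op_def not_integrable_integral_eq)
  qed
qed

lemma T_delta_le_on_absorbing:
  assumes prob: "\<And>s. s \<in> I \<Longrightarrow> prob_space (prod_kernel t h L \<tau> \<mu> s)"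
    and absorb: "absorbing t h L \<tau> F \<mu> I" and "0 \<le> \<delta>"
    and W_le: "\<And>s. s \<in> I \<Longrightarrow> W s \<le> clip01 c" and "s \<in> I"
  shows "T_delta t h L \<tau> F \<mu> \<delta> W s \<le> clip01 (c - \<delta>)"
proof -
  have "T_op t h L \<tau> F \<mu> W s \<le> clip01 c"
    using absorb \<open>s \<in> I\<close>
    by (intro T_op_le_of_AE_absorbed[OF prob] W_le clip01_nonneg) (auto simp: absorbing_def)
  then have "T_delta t h L \<tau> F \<mu> \<delta> W s \<le> clip01 (clip01 c - \<delta>)"
    by (simp add: T_delta_def clip01_mono)
  also have "\<dots> \<le> clip01 (c - \<delta>)"
    using \<open>0 \<le> \<delta>\<close> by (rule clip01_clip01_diff_le)
  finally show ?thesis .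
qed

lemma funpow_T_delta_le_on_absorbing:
  assumes prob: "\<And>s. s \<in> I \<Longrightarrow> prob_space (prod_kernel t h L \<tau> \<mu> s)"
    and absorb: "absorbing t h L \<tau> F \<mu> I" and "0 \<le> \<delta>"
    and V_le: "\<And>s. s \<in> I \<Longrightarrow> V s \<le> clip01 c" and "s \<in> I"
  shows "(T_delta t h L \<tau> F \<mu> \<delta> ^^ l) V s \<le> clip01 (c - real l * \<delta>)"
  using \<open>s \<in> I\<close>
proof (induction l arbitrary: s)
  case 0
  then show ?case by (simp add: V_le)
next
  case (Suc l)
  have "T_delta t h L \<tau> F \<mu> \<delta> ((T_delta t h L \<tau> F \<mu> \<delta> ^^ l) V) s
      \<le> clip01 (c - real l * \<delta> - \<delta>)"
    by (rule T_delta_le_on_absorbing[OF prob absorb \<open>0 \<le> \<delta>\<close> Suc.IH Suc.prems])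
  then show ?case by (simp add: algebra_simps)
qed

lemma funpow_Suc_T_delta_nonneg: "0 \<le> (T_delta t h L \<tau> F \<mu> \<delta> ^^ Suc l) V s"
  by (simp add: T_delta_def clip01_nonneg)

lemma sup_norm_unit_interval:
  assumes "\<And>s. V s \<in> {0..1}"
  shows "V s \<le> clip01 (sup_norm V)" and "sup_norm V \<le> 1"
proof -
  have "bdd_above (range (\<lambda>s. \<bar>V s\<bar>))"
    using assms by (intro bdd_aboveI[where M = 1]) auto
  then have "\<bar>V s\<bar> \<le> sup_norm V"
    unfolding sup_norm_def by (rule cSUP_upper[rotated]) simp
  then show "V s \<le> clip01 (sup_norm V)"
    using assms[of s] by (simp add: clip01_def)
  show "sup_norm V \<le> 1"
    unfolding sup_norm_def using assms by (intro cSUP_least) auto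
qed

theorem proposition7:
  fixes t :: "'x::polish_space \<Rightarrow> 'u::polish_space \<Rightarrow> 'x measure"
    and h :: "'x \<Rightarrow> 'y::metric_space"
    and L :: "'y \<Rightarrow> 'ap set"
    and \<tau> :: "'q::finite \<Rightarrow> 'ap set \<Rightarrow> 'q"
    and F :: "'q set"
    and \<mu> :: "'x \<times> 'q \<Rightarrow> 'u measure"
    and \<delta> :: real and I :: "('x \<times> 'q) set"
  assumes kernel: "(\<lambda>(x, u). t x u) \<in> borel \<rightarrow>\<^sub>M prob_algebra borel"
    and h_meas: "h \<in> borel_measurable borel"
    and L_meas: "L \<in> borel \<rightarrow>\<^sub>M count_space UNIV"
    and delta: "\<delta> \<ge> 0"
    and policy: "stationary_markov_policy \<mu>"
    and absorb: "absorbing t h L \<tau> F \<mu> I"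
  shows "\<forall>V :: 'x \<times> 'q \<Rightarrow> real. (\<forall>s. V s \<in> {0..1}) \<longrightarrow>
           (\<forall>l::nat. l \<ge> 1 \<longrightarrow> (\<forall>s\<in>I.
              0 \<le> (T_delta t h L \<tau> F \<mu> \<delta> ^^ l) V s \<and>
              (T_delta t h L \<tau> F \<mu> \<delta> ^^ l) V s \<le> clip01 (sup_norm V - real l * \<delta>)))
           \<and> (\<delta> > 0 \<longrightarrow> (\<forall>l::nat. l \<ge> 1 \<and> real l \<ge> 1 / \<delta> \<longrightarrow>
              (\<forall>s\<in>I. (T_delta t h L \<tau> F \<mu> \<delta> ^^ l) V s = 0)))"
proof (intro allI impI)
  fix V :: "'x \<times> 'q \<Rightarrow> real"
  assume V: "\<forall>s. V s \<in> {0..1}"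
  let ?T = "T_delta t h L \<tau> F \<mu> \<delta>"
  have nonneg: "0 \<le> (?T ^^ l) V s" if "l \<ge> 1" for l s
    using that funpow_Suc_T_delta_nonneg[where l = "l - 1"] by simp
  have upper: "(?T ^^ l) V s \<le> clip01 (sup_norm V - real l * \<delta>)" if "s \<in> I" for l s
    using prob_space_prod_kernel[OF kernel h_meas L_meas policy] absorb delta
      sup_norm_unit_interval(1)[of V] V that
    by (intro funpow_T_delta_le_on_absorbing) auto
  have "clip01 (sup_norm V - real l * \<delta>) = 0" if "\<delta> > 0" "real l \<ge> 1 / \<delta>" for l
    using that sup_norm_unit_interval(2)[of V] V by (intro clip01_eq_0) (auto simp: field_simps)
  then show "(\<forall>l::nat. l \<ge> 1 \<longrightarrow> (\<forall>s\<in>I.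
              0 \<le> (?T ^^ l) V s \<and> (?T ^^ l) V s \<le> clip01 (sup_norm V - real l * \<delta>)))
           \<and> (\<delta> > 0 \<longrightarrow> (\<forall>l::nat. l \<ge> 1 \<and> real l \<ge> 1 / \<delta> \<longrightarrow> (\<forall>s\<in>I. (?T ^^ l) V s = 0)))"
    using nonneg upper by (metis order_antisym)
qed

end
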